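(* For every $n\ge 2$, the tropicalization of the Cayley-Menger variety of $n$ points in $\mathbb{R}^1$ is the set of ultrametrics on $[n]$: $\mathrm{trop}(\mathrm{CM}_n^1)=U_n$.
   Context: Coordinates of $\mathbb{C}^{\binom{[n]}{2}}$ are indexed by pairs $uv$, $u<v$. $\mathrm{CM}_n^1\subseteq\mathbb{C}^{\binom{[n]}{2}}$ is the Zariski closure of $\{((x_u-x_v)^2)_{u<v}: x_1,\dots,x_n\in\mathbb{R}\}$. Tropicalization uses the max convention: with $K=\mathbb{C}\{\!\{t\}\!\}$ the complex Puiseux series field and $\mathrm{val}(a)=-(\text{smallest exponent of }t\text{ in }a)$, for $X\subseteq\mathbb{C}^S$ with ideal $I$, $\mathrm{trop}(X)$ is the Euclidean closure of $\{(\mathrm{val}(x_i))_{i}: x\in V_K(I)\}\cap\mathbb{R}^S$. $\delta\in\mathbb{R}^{\binom{[n]}{2}}$ is an ultrametric if $\delta_{uv}\le\max\{\delta_{uw},\delta_{vw}\}$ for all distinct $u,v,w\in[n]$ (no nonnegativity required); $U_n$ is the set of ultrametrics. *)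

theory Defs
  imports "HOL-Analysis.Analysis" "HOL-Library.Poly_Mapping"
    "HOL-Computational_Algebra.Formal_Laurent_Series"
begin

definition pairs :: "nat \<Rightarrow> (nat \<times> nat) set" where
  "pairs n = {(u, v). 1 \<le> u \<and> u < v \<and> v \<le> n}"

type_synonym 'v cpoly = "('v \<Rightarrow>\<^sub>0 nat) \<Rightarrow>\<^sub>0 complex"

definition poly_vars :: "'v cpoly \<Rightarrow> 'v set" where
  "poly_vars p = \<Union> (Poly_Mapping.keys ` Poly_Mapping.keys p)"

definition poly_eval :: "(complex \<Rightarrow> 'b::comm_ring_1) \<Rightarrow> 'v cpoly \<Rightarrow> ('v \<Rightarrow> 'b) \<Rightarrow> 'b" where
  "poly_eval emb p x = (\<Sum>m\<in>Poly_Mapping.keys p. emb (Poly_Mapping.lookup p m) * (\<Prod>v\<in>Poly_Mapping.keys m. x v ^ Poly_Mapping.lookup m v))"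

text \<open>The vanishing ideal of CM_n^1 (the ideal of its Zariski closure in
  C[x_uv : uv in pairs n]): polynomials in the variables x_uv vanishing on
  all points ((a_u - a_v)^2)_{u<v}, a real.\<close>
definition CM_ideal :: "nat \<Rightarrow> (nat \<times> nat) cpoly set" where
  "CM_ideal n = {p. poly_vars p \<subseteq> pairs n \<and>
     (\<forall>a :: nat \<Rightarrow> real. poly_eval id p
         (\<lambda>(u, v). complex_of_real ((a u - a v)^2)) = 0)}"

text \<open>Tropicalization (max convention) over the Puiseux series field
  K = \<Union>_N C((t^(1/N))). A point of K^S is written as x_i = f_i(t^(1/N)) with
  f_i in C((s)) (Laurent series) for a common N \<ge> 1; the substitution s = t^(1/N)
  is an injective ring homomorphism, so x \<in> V_K(I) iff all p \<in> I vanish at f in C((s)),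
  and val(x_i) = - subdegree(f_i) / N. The requirement val(x) \<in> R^S means all
  coordinates are nonzero. Vectors in R^S are functions vanishing outside S; the
  closure is taken in the product topology, which on such functions is the
  Euclidean topology of R^S.\<close>
definition trop_val_points :: "(nat \<times> nat) set \<Rightarrow> (nat \<times> nat) cpoly set \<Rightarrow> ((nat \<times> nat) \<Rightarrow> real) set" where
  "trop_val_points S I =
     {\<lambda>i. if i \<in> S then - (real_of_int (fls_subdegree (f i)) / real N) else 0 |
        N f. N \<ge> 1 \<and> (\<forall>i\<in>S. f i \<noteq> (0 :: complex fls)) \<and>
             (\<forall>p\<in>I. poly_eval fls_const p f = 0)}"

definition trop :: "(nat \<times> nat) set \<Rightarrow> (nat \<times> nat) cpoly set \<Rightarrow> ((nat \<times> nat) \<Rightarrow> real) set" where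
  "trop S I = closure (trop_val_points S I)"

definition dsym :: "((nat \<times> nat) \<Rightarrow> real) \<Rightarrow> nat \<Rightarrow> nat \<Rightarrow> real" where
  "dsym \<delta> u v = \<delta> (min u v, max u v)"

definition ultrametrics :: "nat \<Rightarrow> ((nat \<times> nat) \<Rightarrow> real) set" where
  "ultrametrics n = {\<delta>. (\<forall>i. i \<notin> pairs n \<longrightarrow> \<delta> i = 0) \<and>
     (\<forall>u\<in>{1..n}. \<forall>v\<in>{1..n}. \<forall>w\<in>{1..n}. u \<noteq> v \<and> u \<noteq> w \<and> v \<noteq> w \<longrightarrow>
        dsym \<delta> u v \<le> max (dsym \<delta> u w) (dsym \<delta> v w))}"

end

theory Submission
  imports Defs
begin

text \<open>If x_uv = (a_u - a_v)^2 for points a_u on a line, then for every triple u, v, w the Heron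
  polynomial of x_uv, x_uw, x_vw vanishes. At a point over the Puiseux series this forbids
  val x_uv > max (val x_uw) (val x_vw): the leading term of x_uv^2 could not cancel. So tropical
  points are ultrametrics, and U_n is closed.

  Conversely, rational ultrametrics are dense in U_n and each one is attained. For an integer
  ultrametric D, choose real polynomials q_u such that q_u - q_v has order exactly K - D_uv:
  coefficient j of q_u labels the cluster of u among the clusters of level j of the ultrametric.
  The Laurent series a_u = t^-K q_u(t) then give a point of valuation D, because every polynomial
  of the ideal composed with (s, z) \<mapsto> ((z (q_u(s) - q_v(s)))^2) vanishes at all real (s, z)
  and hence identically.\<close>

definition eval_monom :: "('v \<Rightarrow>\<^sub>0 nat) \<Rightarrow> ('v \<Rightarrow> 'b::comm_ring_1) \<Rightarrow> 'b" where
  "eval_monom m x = (\<Prod>v\<in>Poly_Mapping.keys m. x v ^ Poly_Mapping.lookup m v)"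

lemma eval_monom_superset:
  assumes "finite S" "Poly_Mapping.keys m \<subseteq> S"
  shows "eval_monom m x = (\<Prod>v\<in>S. x v ^ Poly_Mapping.lookup m v)"
  unfolding eval_monom_def
  by (rule prod.mono_neutral_left[OF assms]) (simp add: in_keys_iff)

lemma eval_monom_single: "eval_monom (Poly_Mapping.single A k) x = x A ^ k"
  by (subst eval_monom_superset[of "{A}"]) auto

lemma keys_single_add_single:
  "Poly_Mapping.keys (Poly_Mapping.single A (1::nat) + Poly_Mapping.single B 1) \<subseteq> {A, B}"
  using keys_add[of "Poly_Mapping.single A (1::nat)" "Poly_Mapping.single B 1"] by auto

lemma eval_monom_single_add_single:
  assumes "A \<noteq> B"
  shows "eval_monom (Poly_Mapping.single A 1 + Poly_Mapping.single B 1) x = x A * x B"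
  using assms
  by (subst eval_monom_superset[OF _ keys_single_add_single]) (auto simp: lookup_add lookup_single when_def)

lemma poly_eval_superset:
  assumes "finite M" "Poly_Mapping.keys p \<subseteq> M" "emb 0 = 0"
  shows "poly_eval emb p x = (\<Sum>m\<in>M. emb (Poly_Mapping.lookup p m) * eval_monom m x)"
  unfolding poly_eval_def eval_monom_def[symmetric]
  by (rule sum.mono_neutral_left[OF assms(1,2)]) (simp add: in_keys_iff assms(3))

lemma poly_eval_add:
  assumes "emb 0 = 0" "\<And>a b. emb (a + b) = emb a + emb b"
  shows "poly_eval emb (p + q) x = poly_eval emb p x + poly_eval emb q x"
proof -
  let ?M = "Poly_Mapping.keys p \<union> Poly_Mapping.keys q"
  have "poly_eval emb (p + q) x = (\<Sum>m\<in>?M. emb (Poly_Mapping.lookup (p + q) m) * eval_monom m x)"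
    using keys_add[of p q] by (intro poly_eval_superset assms(1)) auto
  also have "\<dots> = (\<Sum>m\<in>?M. emb (Poly_Mapping.lookup p m) * eval_monom m x)
      + (\<Sum>m\<in>?M. emb (Poly_Mapping.lookup q m) * eval_monom m x)"
    by (simp add: lookup_add assms(2) distrib_right sum.distrib)
  also have "\<dots> = poly_eval emb p x + poly_eval emb q x"
    using poly_eval_superset[where emb = emb, OF _ _ assms(1), of ?M p x]
      poly_eval_superset[where emb = emb, OF _ _ assms(1), of ?M q x] by simp
  finally show ?thesis .
qed

lemma poly_eval_single:
  assumes "emb 0 = 0"
  shows "poly_eval emb (Poly_Mapping.single m c) x = emb c * eval_monom m x"
  by (subst poly_eval_superset[of "{m}"]) (auto simp: assms)

lemma prod_comp_morphism:
  "h 1 = 1 \<Longrightarrow> (\<And>x y. h (x * y) = h x * h y) \<Longrightarrow> prod (h \<circ> g) A = h (prod g A)"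
  by (induct A rule: infinite_finite_induct) simp_all

lemma power_comp_morphism:
  "h 1 = 1 \<Longrightarrow> (\<And>x y. h (x * y) = h x * h y) \<Longrightarrow> h (a ^ k) = h a ^ k"
  by (induct k) simp_all

lemma poly_eval_hom:
  fixes \<phi> :: "'a::comm_ring_1 \<Rightarrow> 'b::comm_ring_1"
  assumes "\<phi> 0 = 0" "\<phi> 1 = 1" "\<And>a b. \<phi> (a + b) = \<phi> a + \<phi> b" "\<And>a b. \<phi> (a * b) = \<phi> a * \<phi> b"
  shows "\<phi> (poly_eval emb p x) = poly_eval (\<phi> \<circ> emb) p (\<phi> \<circ> x)"
  unfolding poly_eval_def
  by (simp add: sum_comp_morphism[of \<phi>, OF assms(1,3), symmetric]
      prod_comp_morphism[of \<phi>, OF assms(2,4), symmetric] power_comp_morphism[of \<phi>, OF assms(2,4)]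
      assms(4) comp_def)

section \<open>Tropical points are ultrametrics\<close>

definition heron_poly :: "'v \<Rightarrow> 'v \<Rightarrow> 'v \<Rightarrow> 'v cpoly" where
  "heron_poly A B C =
     Poly_Mapping.single (Poly_Mapping.single A 2) 1 + Poly_Mapping.single (Poly_Mapping.single B 2) 1 +
     Poly_Mapping.single (Poly_Mapping.single C 2) 1 +
     Poly_Mapping.single (Poly_Mapping.single A 1 + Poly_Mapping.single B 1) (-2) +
     Poly_Mapping.single (Poly_Mapping.single A 1 + Poly_Mapping.single C 1) (-2) +
     Poly_Mapping.single (Poly_Mapping.single B 1 + Poly_Mapping.single C 1) (-2)"

lemma poly_eval_heron_poly:
  assumes "emb 0 = 0" "emb 1 = 1" "\<And>a b. emb (a + b) = emb a + emb b"
    and "A \<noteq> B" "A \<noteq> C" "B \<noteq> C"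
  shows "poly_eval emb (heron_poly A B C) x =
    x A ^ 2 + x B ^ 2 + x C ^ 2 - 2 * (x A * x B + x A * x C + x B * x C)"
proof -
  have "emb 2 = 2"
    using assms(3)[of 1 1] by (simp add: assms(2))
  moreover have "emb (-2) + emb 2 = 0"
    using assms(3)[of "-2" 2] by (simp add: assms(1))
  ultimately have emb_minus_2: "emb (-2) = -2"
    by (simp add: add_eq_0_iff2)
  show ?thesis
    unfolding heron_poly_def
    by (simp only: poly_eval_add[where emb = emb, OF assms(1,3)] poly_eval_single[where emb = emb, OF assms(1)]
        eval_monom_single eval_monom_single_add_single[OF assms(4)] eval_monom_single_add_single[OF assms(5)]
        eval_monom_single_add_single[OF assms(6)] assms(2) emb_minus_2)
      (simp add: algebra_simps)
qed

lemma poly_vars_add_subset: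
  "poly_vars p \<subseteq> V \<Longrightarrow> poly_vars q \<subseteq> V \<Longrightarrow> poly_vars (p + q) \<subseteq> V"
  unfolding poly_vars_def using keys_add[of p q] by blast

lemma poly_vars_single_subset:
  "Poly_Mapping.keys m \<subseteq> V \<Longrightarrow> poly_vars (Poly_Mapping.single m c) \<subseteq> V"
  unfolding poly_vars_def by simp

lemma poly_vars_heron_poly: "poly_vars (heron_poly A B C) \<subseteq> {A, B, C}"
  unfolding heron_poly_def
  by (intro poly_vars_add_subset poly_vars_single_subset order.trans[OF keys_single_add_single]) auto

text \<open>The Heron polynomial is -16 times the squared area of a triangle with squared side
  lengths x, y, z, so it vanishes on squared distances of collinear points.\<close>
lemma heron_collinear:
  fixes a b c :: "'a::comm_ring_1"
  shows "((a - b)^2)^2 + ((a - c)^2)^2 + ((b - c)^2)^2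
    - 2 * ((a - b)^2 * (a - c)^2 + (a - b)^2 * (b - c)^2 + (a - c)^2 * (b - c)^2) = 0"
  by (simp add: power2_eq_square algebra_simps)

lemma sorted_pair_in_pairs:
  "u \<in> {1..n} \<Longrightarrow> v \<in> {1..n} \<Longrightarrow> u \<noteq> v \<Longrightarrow> (min u v, max u v) \<in> pairs n"
  by (auto simp: pairs_def min_def max_def)

lemma sorted_pairs_distinct:
  assumes "u \<noteq> v" "u \<noteq> w" "v \<noteq> w"
  shows "(min u v, max u v) \<noteq> (min u w, max u w)" "(min u v, max u v) \<noteq> (min v w, max v w)"
    "(min u w, max u w) \<noteq> (min v w, max v w)"
  using assms by (auto simp: min_def max_def)

lemma finite_pairs: "finite (pairs n)"
  by (rule finite_subset[of _ "{1..n} \<times> {1..n}"]) (auto simp: pairs_def)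

lemma heron_poly_in_CM_ideal:
  assumes uvw: "u \<in> {1..n}" "v \<in> {1..n}" "w \<in> {1..n}" "u \<noteq> v" "u \<noteq> w" "v \<noteq> w"
  shows "heron_poly (min u v, max u v) (min u w, max u w) (min v w, max v w) \<in> CM_ideal n"
  unfolding CM_ideal_def
proof (intro CollectI conjI allI)
  have "{(min u v, max u v), (min u w, max u w), (min v w, max v w)} \<subseteq> pairs n"
    using uvw by (simp add: sorted_pair_in_pairs)
  then show "poly_vars (heron_poly (min u v, max u v) (min u w, max u w) (min v w, max v w)) \<subseteq> pairs n"
    using poly_vars_heron_poly by (rule order_trans[rotated])
next
  fix a :: "nat \<Rightarrow> real"
  let ?x = "\<lambda>(u, v). complex_of_real ((a u - a v)^2)"
  have x_sorted: "?x (min s t, max s t) = (of_real (a s) - of_real (a t))^2" for s t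
    by (cases "s \<le> t") (simp_all add: min_def max_def power2_commute)
  let ?A = "(min u v, max u v)" and ?B = "(min u w, max u w)" and ?C = "(min v w, max v w)"
  have "poly_eval id (heron_poly ?A ?B ?C) ?x
      = ?x ?A ^ 2 + ?x ?B ^ 2 + ?x ?C ^ 2 - 2 * (?x ?A * ?x ?B + ?x ?A * ?x ?C + ?x ?B * ?x ?C)"
    using sorted_pairs_distinct[OF uvw(4-6)] by (intro poly_eval_heron_poly) simp_all
  also have "\<dots> = 0"
    unfolding x_sorted by (rule heron_collinear)
  finally show "poly_eval id (heron_poly ?A ?B ?C) ?x = 0" .
qed

lemma fls_subdegree_heron_min_le:
  fixes x y z :: "'a::idom fls"
  assumes "x \<noteq> 0" and heron: "x^2 + y^2 + z^2 - 2 * (x * y + x * z + y * z) = 0"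
  shows "min (fls_subdegree y) (fls_subdegree z) \<le> fls_subdegree x"
proof (rule ccontr)
  assume "\<not> ?thesis"
  then have lt: "fls_subdegree x < fls_subdegree y" "fls_subdegree x < fls_subdegree z"
    by auto
  define d where "d = fls_subdegree x + fls_subdegree x"
  have "fls_nth (x * x) d \<noteq> 0"
    using assms(1) nth_fls_subdegree_nonzero[of "x * x"] by (simp add: d_def)
  moreover have "fls_nth (y * y) d = 0" "fls_nth (z * z) d = 0" "fls_nth (x * y) d = 0" "fls_nth (x * z) d = 0"
    "fls_nth (y * z) d = 0"
    using lt unfolding d_def by (auto intro!: fls_times_nth_eq0)
  moreover have "fls_nth (x^2 + y^2 + z^2 - 2 * (x * y + x * z + y * z)) d = 0"
    using heron by simp
  ultimately show False
    by (simp add: power2_eq_square fls_mult_const_nth)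
qed

lemma trop_val_points_subset_ultrametrics:
  "trop_val_points (pairs n) (CM_ideal n) \<subseteq> ultrametrics n"
proof
  fix \<delta> assume "\<delta> \<in> trop_val_points (pairs n) (CM_ideal n)"
  then obtain N f where \<delta>: "\<delta> = (\<lambda>i. if i \<in> pairs n then - (real_of_int (fls_subdegree (f i)) / real N) else 0)"
    and nonzero: "\<forall>i\<in>pairs n. f i \<noteq> (0 :: complex fls)"
    and vanish: "\<forall>p\<in>CM_ideal n. poly_eval fls_const p f = 0"
    unfolding trop_val_points_def by blast
  have "dsym \<delta> u v \<le> max (dsym \<delta> u w) (dsym \<delta> v w)"
    if uvw: "u \<in> {1..n}" "v \<in> {1..n}" "w \<in> {1..n}" "u \<noteq> v" "u \<noteq> w" "v \<noteq> w" for u v w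
  proof -
    let ?A = "(min u v, max u v)" and ?B = "(min u w, max u w)" and ?C = "(min v w, max v w)"
    have "poly_eval fls_const (heron_poly ?A ?B ?C) f = 0"
      using vanish heron_poly_in_CM_ideal[OF uvw] by blast
    then have "f ?A ^ 2 + f ?B ^ 2 + f ?C ^ 2 - 2 * (f ?A * f ?B + f ?A * f ?C + f ?B * f ?C) = 0"
      by (subst (asm) poly_eval_heron_poly[OF _ _ _ sorted_pairs_distinct[OF uvw(4-6)]])
        (simp_all add: fls_plus_const)
    then have "min (fls_subdegree (f ?B)) (fls_subdegree (f ?C)) \<le> fls_subdegree (f ?A)"
      using nonzero sorted_pair_in_pairs[OF uvw(1,2,4)] by (intro fls_subdegree_heron_min_le) auto
    then have "- (fls_subdegree (f ?A) / real N)
        \<le> max (- (fls_subdegree (f ?B) / real N)) (- (fls_subdegree (f ?C) / real N))"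
      by (auto simp: min_le_iff_disj le_max_iff_disj divide_right_mono)
    then show ?thesis
      unfolding dsym_def \<delta> using uvw by (simp add: sorted_pair_in_pairs)
  qed
  moreover have "\<forall>i. i \<notin> pairs n \<longrightarrow> \<delta> i = 0"
    unfolding \<delta> by simp
  ultimately show "\<delta> \<in> ultrametrics n"
    unfolding ultrametrics_def by blast
qed

lemma closed_ultrametrics: "closed (ultrametrics n)"
  unfolding ultrametrics_def dsym_def Ball_def
  by (intro closed_Collect_conj closed_Collect_all closed_Collect_imp open_Collect_const
      closed_Collect_eq closed_Collect_le continuous_on_max continuous_on_const; simp)

lemma trop_subset_ultrametrics: "trop (pairs n) (CM_ideal n) \<subseteq> ultrametrics n"
  unfolding trop_def
  by (rule closure_minimal[OF trop_val_points_subset_ultrametrics closed_ultrametrics])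

section \<open>Realising ultrametrics by orders of vanishing\<close>

text \<open>For j < e u v the points u and v lie in the same cluster of level j; the clusters are the
  classes of an equivalence relation because e is symmetric and min (e u w) (e v w) \<le> e u v.\<close>
definition cluster_label :: "nat set \<Rightarrow> (nat \<Rightarrow> nat \<Rightarrow> nat) \<Rightarrow> nat \<Rightarrow> nat \<Rightarrow> nat" where
  "cluster_label A e j u = (LEAST w. w \<in> A \<and> (w = u \<or> j < e u w))"

lemma cluster_label_eq_iff:
  assumes sym: "\<And>u v. u \<in> A \<Longrightarrow> v \<in> A \<Longrightarrow> e u v = e v u"
    and ultra: "\<And>u v w. u \<in> A \<Longrightarrow> v \<in> A \<Longrightarrow> w \<in> A \<Longrightarrow> u \<noteq> v \<Longrightarrow> u \<noteq> w \<Longrightarrow> v \<noteq> w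
      \<Longrightarrow> min (e u w) (e v w) \<le> e u v"
    and "u \<in> A" "v \<in> A"
  shows "cluster_label A e j u = cluster_label A e j v \<longleftrightarrow> u = v \<or> j < e u v"
proof -
  define R where "R x y \<longleftrightarrow> y = x \<or> j < e x y" for x y
  have R_sym: "R y x" if "x \<in> A" "y \<in> A" "R x y" for x y
    using that sym unfolding R_def by auto
  have R_trans: "R x z" if "x \<in> A" "y \<in> A" "z \<in> A" "R x y" "R y z" for x y z
  proof (cases "x = y \<or> y = z \<or> x = z")
    case False
    then have "min (e x y) (e z y) \<le> e x z"
      using that ultra by blast
    then show ?thesis
      using that sym unfolding R_def by (auto simp: min_def split: if_splits)
  qed (use that in \<open>auto simp: R_def\<close>)
  have label: "cluster_label A e j x \<in> A \<and> R x (cluster_label A e j x)" if "x \<in> A" for x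
    unfolding cluster_label_def R_def by (rule LeastI[of _ x]) (simp add: that)
  have "cluster_label A e j u = cluster_label A e j v \<longleftrightarrow> R u v"
  proof
    assume "cluster_label A e j u = cluster_label A e j v"
    then show "R u v"
      using label[OF \<open>u \<in> A\<close>] label[OF \<open>v \<in> A\<close>] R_sym R_trans \<open>u \<in> A\<close> \<open>v \<in> A\<close> by metis
  next
    assume "R u v"
    then have "(\<lambda>w. w \<in> A \<and> R u w) = (\<lambda>w. w \<in> A \<and> R v w)"
      using R_sym R_trans \<open>u \<in> A\<close> \<open>v \<in> A\<close> by blast
    then show "cluster_label A e j u = cluster_label A e j v"
      unfolding cluster_label_def R_def by simp
  qed
  then show ?thesis
    unfolding R_def by auto
qed

definition cluster_poly :: "nat set \<Rightarrow> (nat \<Rightarrow> nat \<Rightarrow> nat) \<Rightarrow> nat \<Rightarrow> nat \<Rightarrow> real poly" where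
  "cluster_poly A e E u = (\<Sum>j\<le>E. monom (real (cluster_label A e j u)) j)"

lemma coeff_cluster_poly:
  "coeff (cluster_poly A e E u) j = (if j \<le> E then real (cluster_label A e j u) else 0)"
  by (simp add: cluster_poly_def coeff_sum coeff_monom)

lemma cluster_poly_diff_order:
  assumes sym: "\<And>u v. u \<in> A \<Longrightarrow> v \<in> A \<Longrightarrow> e u v = e v u"
    and ultra: "\<And>u v w. u \<in> A \<Longrightarrow> v \<in> A \<Longrightarrow> w \<in> A \<Longrightarrow> u \<noteq> v \<Longrightarrow> u \<noteq> w \<Longrightarrow> v \<noteq> w
      \<Longrightarrow> min (e u w) (e v w) \<le> e u v"
    and "u \<in> A" "v \<in> A" "u \<noteq> v" "e u v \<le> E"
  shows "coeff (cluster_poly A e E u - cluster_poly A e E v) (e u v) \<noteq> 0"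
    and "j < e u v \<Longrightarrow> coeff (cluster_poly A e E u - cluster_poly A e E v) j = 0"
  using cluster_label_eq_iff[OF sym ultra \<open>u \<in> A\<close> \<open>v \<in> A\<close>] assms(5,6)
  by (auto simp: coeff_cluster_poly)

section \<open>Laurent series points of the Cayley-Menger variety\<close>

lemma poly_eq_0_if_vanishes_on_reals:
  fixes h :: "complex poly"
  assumes "\<And>t::real. poly h (of_real t) = 0"
  shows "h = 0"
proof (rule ccontr)
  assume "h \<noteq> 0"
  then have "finite {z. poly h z = 0}"
    by (rule poly_roots_finite)
  moreover have "range complex_of_real \<subseteq> {z. poly h z = 0}"
    using assms by auto
  moreover have "infinite (range complex_of_real)"
    using infinite_UNIV_char_0 finite_imageD[of complex_of_real UNIV] inj_of_real by auto
  ultimately show False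
    using finite_subset by blast
qed

lemma coeff_poly_at_const:
  fixes G :: "'a::comm_ring_1 poly poly"
  shows "coeff (poly G [:c:]) k = poly (map_poly (\<lambda>r. coeff r k) G) c"
proof (induction G)
  case (pCons a G)
  then show ?case
    by (simp add: map_poly_pCons)
qed simp

lemma bivariate_poly_eq_0_if_vanishes_on_reals:
  fixes G :: "complex poly poly"
  assumes "\<And>s z :: real. poly (poly G [:of_real z:]) (of_real s) = 0"
  shows "G = 0"
proof (intro poly_eqI)
  fix i k
  have slices: "poly G [:of_real z:] = 0" for z
    using assms by (intro poly_eq_0_if_vanishes_on_reals)
  have "map_poly (\<lambda>r. coeff r k) G = 0"
    by (rule poly_eq_0_if_vanishes_on_reals) (simp add: coeff_poly_at_const[symmetric] slices)
  then have "coeff (map_poly (\<lambda>r. coeff r k) G) i = 0"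
    by simp
  then show "coeff (coeff G i) k = coeff (coeff 0 i) k"
    by (simp add: coeff_map_poly)
qed

lemma map_poly_add_hom:
  assumes "h 0 = 0" "\<And>a b. h (a + b) = h a + h b"
  shows "map_poly h (p + q) = map_poly h p + map_poly h q"
  by (rule poly_eqI) (simp add: coeff_map_poly assms)

lemma map_poly_mult_hom:
  fixes h :: "'a::comm_semiring_1 \<Rightarrow> 'b::comm_semiring_1"
  assumes "h 0 = 0" "\<And>a b. h (a + b) = h a + h b" "\<And>a b. h (a * b) = h a * h b"
  shows "map_poly h (p * q) = map_poly h p * map_poly h q"
proof (rule poly_eqI)
  fix n
  have "coeff (map_poly h (p * q)) n = h (\<Sum>i\<le>n. coeff p i * coeff q (n - i))"
    by (simp add: coeff_map_poly assms(1) coeff_mult)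
  also have "\<dots> = (\<Sum>i\<le>n. h (coeff p i) * h (coeff q (n - i)))"
    by (simp add: sum_comp_morphism[of h, OF assms(1,2), symmetric] assms(3))
  also have "\<dots> = coeff (map_poly h p * map_poly h q) n"
    by (simp add: coeff_map_poly assms(1) coeff_mult)
  finally show "coeff (map_poly h (p * q)) n = coeff (map_poly h p * map_poly h q) n" .
qed

definition fls_of_poly :: "'a::comm_ring_1 poly \<Rightarrow> 'a fls" where
  "fls_of_poly p = fps_to_fls (fps_of_poly p)"

lemma fls_of_poly_hom:
  "fls_of_poly 0 = 0" "fls_of_poly 1 = 1" "fls_of_poly (p + q) = fls_of_poly p + fls_of_poly q"
  "fls_of_poly (p * q) = fls_of_poly p * fls_of_poly q" "fls_of_poly [:c:] = fls_const c"
  by (simp_all add: fls_of_poly_def fps_of_poly_add fps_of_poly_mult fls_times_fps_to_fls fps_of_poly_const)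

lemma fls_subdegree_fls_of_poly:
  assumes "coeff p d \<noteq> 0" "\<And>j. j < d \<Longrightarrow> coeff p j = 0"
  shows "fls_of_poly p \<noteq> 0" "fls_subdegree (fls_of_poly p) = int d"
proof -
  have nth: "fls_nth (fls_of_poly p) k = (if k < 0 then 0 else coeff p (nat k))" for k
    by (simp add: fls_of_poly_def)
  show "fls_of_poly p \<noteq> 0"
    using assms(1) nth[of "int d"] by auto
  show "fls_subdegree (fls_of_poly p) = int d"
    using assms by (intro fls_subdegree_eqI) (auto simp: nth)
qed

text \<open>The ring homomorphism sending s to the Laurent variable and z to its K-th inverse power.\<close>
definition fls_of_bivariate :: "nat \<Rightarrow> complex poly poly \<Rightarrow> complex fls" where
  "fls_of_bivariate K G = poly (map_poly fls_of_poly G) (fls_X_inv ^ K)"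

lemma fls_of_bivariate_hom:
  "fls_of_bivariate K 0 = 0" "fls_of_bivariate K 1 = 1"
  "fls_of_bivariate K (G + H) = fls_of_bivariate K G + fls_of_bivariate K H"
  "fls_of_bivariate K (G * H) = fls_of_bivariate K G * fls_of_bivariate K H"
  by (simp_all add: fls_of_bivariate_def fls_of_poly_hom map_poly_add_hom[of fls_of_poly]
      map_poly_mult_hom[of fls_of_poly])

lemma poly_map_poly_of_real: "poly (map_poly of_real p) (of_real x) = (of_real (poly p x) :: complex)"
  by (induction p) (auto simp: map_poly_pCons)

lemma CM_ideal_vanishes_at_Laurent_config:
  fixes q :: "nat \<Rightarrow> real poly"
  assumes "p \<in> CM_ideal n"
  shows "poly_eval fls_const p
    (\<lambda>(u, v). (fls_X_inv ^ K * fls_of_poly (map_poly of_real (q u - q v)))^2) = 0"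
proof -
  define P where "P = (\<lambda>(u, v). ([:0, 1:] * [:map_poly of_real (q u - q v):])^2 :: complex poly poly)"
  let ?const = "\<lambda>c. [:[:c:]:] :: complex poly poly"
  have "poly_eval ?const p P = 0"
  proof (rule bivariate_poly_eq_0_if_vanishes_on_reals)
    fix s z :: real
    define eval where "eval G = poly (poly G [:of_real z:]) (of_real s)" for G :: "complex poly poly"
    have "eval (poly_eval ?const p P) = poly_eval (eval \<circ> ?const) p (eval \<circ> P)"
      by (rule poly_eval_hom) (simp_all add: eval_def)
    also have "eval \<circ> P = (\<lambda>(u, v). complex_of_real ((z * poly (q u) s - z * poly (q v) s)^2))"
      by (auto simp: fun_eq_iff eval_def P_def poly_map_poly_of_real algebra_simps)
    also have "eval \<circ> ?const = id"
      by (simp add: fun_eq_iff eval_def)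
    also have "poly_eval id p (\<lambda>(u, v). complex_of_real ((z * poly (q u) s - z * poly (q v) s)^2)) = 0"
      using assms unfolding CM_ideal_def by (auto dest!: spec[of _ "\<lambda>u. z * poly (q u) s"])
    finally show "poly (poly (poly_eval ?const p P) [:of_real z:]) (of_real s) = 0"
      unfolding eval_def .
  qed
  moreover have "fls_of_bivariate K \<circ> ?const = fls_const"
    by (simp add: fun_eq_iff fls_of_bivariate_def fls_of_poly_hom map_poly_pCons)
  moreover have "fls_of_bivariate K \<circ> P
      = (\<lambda>(u, v). (fls_X_inv ^ K * fls_of_poly (map_poly of_real (q u - q v)))^2)"
    by (simp add: fun_eq_iff P_def fls_of_bivariate_def fls_of_poly_hom power2_eq_square
        map_poly_mult_hom[of fls_of_poly] map_poly_pCons mult_ac)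
  ultimately show ?thesis
    using poly_eval_hom[of "fls_of_bivariate K" ?const p P] by (simp add: fls_of_bivariate_hom)
qed

text \<open>The point is f_uv = (t^-K (q_u - q_v))^2 with orders e_uv = K - D_uv of q_u - q_v, so that
  f_uv has subdegree -2 D_uv; taking N = 2k yields valuation D_uv / k.\<close>
lemma integer_ultrametric_in_trop_val_points:
  fixes D :: "nat \<times> nat \<Rightarrow> int" and k :: nat
  assumes "k \<ge> 1"
    and ultra: "\<And>u v w. u \<in> {1..n} \<Longrightarrow> v \<in> {1..n} \<Longrightarrow> w \<in> {1..n} \<Longrightarrow> u \<noteq> v \<Longrightarrow> u \<noteq> w \<Longrightarrow> v \<noteq> w
      \<Longrightarrow> D (min u v, max u v) \<le> max (D (min u w, max u w)) (D (min v w, max v w))"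
  shows "(\<lambda>i. if i \<in> pairs n then real_of_int (D i) / real k else 0) \<in> trop_val_points (pairs n) (CM_ideal n)"
proof -
  define K :: nat where "K = nat (\<Sum>i\<in>pairs n. \<bar>D i\<bar>)"
  have D_bound: "\<bar>D i\<bar> \<le> int K" if "i \<in> pairs n" for i
    using member_le_sum[of i "pairs n" "\<lambda>i. \<bar>D i\<bar>"] that finite_pairs by (simp add: K_def)
  define e where "e u v = nat (int K - D (min u v, max u v))" for u v
  have e_sym: "e u v = e v u" for u v
    by (simp add: e_def min.commute max.commute)
  have e_ultra: "min (e u w) (e v w) \<le> e u v"
    if "u \<in> {1..n}" "v \<in> {1..n}" "w \<in> {1..n}" "u \<noteq> v" "u \<noteq> w" "v \<noteq> w" for u v w
    using ultra[OF that] unfolding e_def by (auto simp: le_max_iff_disj min_le_iff_disj intro: nat_mono)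
  define q where "q = cluster_poly {1..n} e (2 * K)"
  define f where "f = (\<lambda>(u, v). (fls_X_inv ^ K * fls_of_poly (map_poly of_real (q u - q v)))^2 :: complex fls)"
  have f_pairs: "f i \<noteq> 0 \<and> fls_subdegree (f i) = - 2 * D i" if "i \<in> pairs n" for i
  proof -
    obtain u v where i: "i = (u, v)"
      by (cases i)
    with that have uv: "u \<in> {1..n}" "v \<in> {1..n}" "u < v"
      by (auto simp: pairs_def)
    have "e u v \<le> 2 * K"
      using D_bound[OF that] uv unfolding e_def i by auto
    then have "coeff (q u - q v) (e u v) \<noteq> 0" "j < e u v \<Longrightarrow> coeff (q u - q v) j = 0" for j
      unfolding q_def using uv by (intro cluster_poly_diff_order e_sym e_ultra; simp)+
    then have "fls_of_poly (map_poly complex_of_real (q u - q v)) \<noteq> 0 \<and>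
        fls_subdegree (fls_of_poly (map_poly complex_of_real (q u - q v))) = int (e u v)"
      by (intro conjI fls_subdegree_fls_of_poly) (simp_all add: coeff_map_poly)
    moreover have "int (e u v) = int K - D i"
      unfolding e_def using D_bound[OF that] uv by (simp add: i)
    ultimately show ?thesis
      by (simp add: i f_def fls_subdegree_pow fls_subdegree_mult_fls_X_inv_power)
  qed
  have "(\<lambda>i. if i \<in> pairs n then real_of_int (D i) / real k else 0)
      = (\<lambda>i. if i \<in> pairs n then - (real_of_int (fls_subdegree (f i)) / real (2 * k)) else 0)"
    using f_pairs by (auto simp: fun_eq_iff)
  moreover have "\<forall>p\<in>CM_ideal n. poly_eval fls_const p f = 0"
    unfolding f_def using CM_ideal_vanishes_at_Laurent_config by blast
  ultimately show ?thesis
    unfolding trop_val_points_def using f_pairs \<open>k \<ge> 1\<close> by fastforce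
qed

section \<open>Density of rational ultrametrics\<close>

lemma tendsto_fun_componentwise:
  fixes f :: "'x \<Rightarrow> 'a \<Rightarrow> 'b::topological_space"
  assumes "\<And>i. ((\<lambda>c. f c i) \<longlongrightarrow> l i) F"
  shows "(f \<longlongrightarrow> l) F"
proof -
  have "limitin (product_topology (\<lambda>i. euclidean) UNIV) f l F"
    using assms by (simp add: limitin_componentwise)
  then show ?thesis
    by (simp add: euclidean_product_topology)
qed

lemma floor_scaled_LIMSEQ: "(\<lambda>j. real_of_int \<lfloor>real (Suc j) * x\<rfloor> / real (Suc j)) \<longlonglongrightarrow> x"
proof (rule tendsto_sandwich[of "\<lambda>j. x - inverse (real (Suc j))" _ _ "\<lambda>_. x"])
  show "\<forall>\<^sub>F j in sequentially. x - inverse (real (Suc j)) \<le> real_of_int \<lfloor>real (Suc j) * x\<rfloor> / real (Suc j)"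
  proof (intro always_eventually allI)
    fix j
    have "x - inverse (real (Suc j)) = (real (Suc j) * x - 1) / real (Suc j)"
      by (simp add: field_simps)
    also have "\<dots> \<le> real_of_int \<lfloor>real (Suc j) * x\<rfloor> / real (Suc j)"
      by (intro divide_right_mono) linarith+
    finally show "x - inverse (real (Suc j)) \<le> real_of_int \<lfloor>real (Suc j) * x\<rfloor> / real (Suc j)" .
  qed
  show "\<forall>\<^sub>F j in sequentially. real_of_int \<lfloor>real (Suc j) * x\<rfloor> / real (Suc j) \<le> x"
    using of_int_floor_le by (intro always_eventually allI) (simp add: pos_divide_le_eq mult.commute)
  show "(\<lambda>j. x - inverse (real (Suc j))) \<longlonglongrightarrow> x"
    using tendsto_diff[OF tendsto_const LIMSEQ_inverse_real_of_nat, of x] by simp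
qed simp

lemma ultrametrics_subset_trop: "ultrametrics n \<subseteq> trop (pairs n) (CM_ideal n)"
proof
  fix \<delta> assume \<delta>: "\<delta> \<in> ultrametrics n"
  define g where "g j = (\<lambda>i. if i \<in> pairs n then real_of_int \<lfloor>real (Suc j) * \<delta> i\<rfloor> / real (Suc j) else 0)"
    for j
  have "g j \<in> trop_val_points (pairs n) (CM_ideal n)" for j
    unfolding g_def
  proof (rule integer_ultrametric_in_trop_val_points)
    fix u v w assume "u \<in> {1..n}" "v \<in> {1..n}" "w \<in> {1..n}" "u \<noteq> v" "u \<noteq> w" "v \<noteq> w"
    then have "\<delta> (min u v, max u v) \<le> max (\<delta> (min u w, max u w)) (\<delta> (min v w, max v w))"
      using \<delta> unfolding ultrametrics_def dsym_def by blast
    then show "\<lfloor>real (Suc j) * \<delta> (min u v, max u v)\<rfloor>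
        \<le> max \<lfloor>real (Suc j) * \<delta> (min u w, max u w)\<rfloor> \<lfloor>real (Suc j) * \<delta> (min v w, max v w)\<rfloor>"
      by (auto simp: le_max_iff_disj intro: floor_mono)
  qed simp
  moreover have "g \<longlonglongrightarrow> \<delta>"
  proof (rule tendsto_fun_componentwise)
    fix i
    show "(\<lambda>j. g j i) \<longlonglongrightarrow> \<delta> i"
    proof (cases "i \<in> pairs n")
      case True
      then show ?thesis
        using floor_scaled_LIMSEQ[of "\<delta> i"] by (simp add: g_def)
    next
      case False
      then have "\<delta> i = 0"
        using \<delta> unfolding ultrametrics_def by blast
      with False show ?thesis
        by (simp add: g_def)
    qed
  qed
  ultimately show "\<delta> \<in> trop (pairs n) (CM_ideal n)"
    unfolding trop_def closure_sequential by blast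
qed

theorem proposition2p1:
  fixes n :: nat
  assumes "n \<ge> 2"
  shows "trop (pairs n) (CM_ideal n) = ultrametrics n"
  using trop_subset_ultrametrics ultrametrics_subset_trop by (rule antisym)

end
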